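(* Let $\mathcal{O}$ be an order of $K$ and let $(r,\tau),(r',\tau')\in\mathbb{Z}/f\mathbb{Z}\times H^{\mathcal{O}}(\mathfrak{N})$. Put $\tau^*=\frac{-1}{fN\tau}$ and $\tau'^*=\frac{-1}{fN\tau'}$. Then $(r,\tau)\sim_f(r',\tau')$ if and only if $(r',\tau^* )\sim_f(r,\tau'^* )$.
   Context: $K$ real quadratic with discriminant $d_K$ and nontrivial automorphism $\sigma$; $N=\prod l_i^{e_i}$ with $l_i$ distinct primes split in $K$; $\mathfrak{N}=\prod\eta_i^{e_i}$ with $\eta_i$ a prime of $\mathcal{O}_K$ above $l_i$; $f$ a positive integer coprime to $Nd_K$. $\Lambda_\tau=\mathbb{Z}+\tau\mathbb{Z}$, $\mathcal{O}_\tau=\{\lambda\in K:\lambda\Lambda_\tau\subseteq\Lambda_\tau\}$. Product convention: $\mathfrak{N}\Lambda_\tau$ means $(\mathfrak{N}\cap\mathcal{O}_\tau)\Lambda_\tau$. $H(\mathfrak{N})=\{\tau\in K:\mathfrak{N}\Lambda_\tau=\Lambda_{N\tau},\ \tau-\tau^\sigma>0\}$ and $H^{\mathcal{O}}(\mathfrak{N})=\{\tau\in H(\mathfrak{N}):\mathcal{O}_\tau=\mathcal{O}\}$. For $(r,\tau),(r',\tau')\in\mathbb{Z}/f\mathbb{Z}\times(K\setminus\mathbb{Q})$, $(r,\tau)\sim_f(r',\tau')$ means there is $\gamma=\begin{pmatrix}a&b\\c&d\end{pmatrix}\in\Gamma_0(fN)$ with $d^{-1}r\equiv r'\pmod f$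 and $\tau'=\frac{a\tau+b}{c\tau+d}$. *)

theory Defs
  imports Complex_Main "HOL-Computational_Algebra.Polynomial" "HOL-Computational_Algebra.Squarefree"
begin

definition Kfield :: "int \<Rightarrow> real set" where
  "Kfield D = {x. \<exists>a b :: rat. x = of_rat a + of_rat b * sqrt (of_int D)}"

definition kconj :: "int \<Rightarrow> real \<Rightarrow> real" where
  "kconj D x = (THE y. \<exists>a b :: rat. x = of_rat a + of_rat b * sqrt (of_int D)
                              \<and> y = of_rat a - of_rat b * sqrt (of_int D))"

definition discK :: "int \<Rightarrow> int" where
  "discK D = (if D mod 4 = 1 then D else 4 * D)"

definition OK :: "int \<Rightarrow> real set" where
  "OK D = {x \<in> Kfield D. \<exists>p :: int poly. lead_coeff p = 1 \<and> poly (map_poly of_int p) x = 0}"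

definition lat_mult :: "real set \<Rightarrow> real set \<Rightarrow> real set" where
  "lat_mult A B = {\<Sum>i<n. x i * y i | (n::nat) x y. \<forall>i<n. x i \<in> A \<and> y i \<in> B}"

definition is_ideal :: "int \<Rightarrow> real set \<Rightarrow> bool" where
  "is_ideal D I \<longleftrightarrow> I \<subseteq> OK D \<and> 0 \<in> I \<and> (\<forall>x\<in>I. \<forall>y\<in>I. x + y \<in> I) \<and>
     (\<forall>x\<in>I. \<forall>a\<in>OK D. a * x \<in> I)"

definition prime_ideal :: "int \<Rightarrow> real set \<Rightarrow> bool" where
  "prime_ideal D P \<longleftrightarrow> is_ideal D P \<and> P \<noteq> OK D \<and> P \<noteq> {0} \<and>
     (\<forall>x\<in>OK D. \<forall>y\<in>OK D. x * y \<in> P \<longrightarrow> x \<in> P \<or> y \<in> P)"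

definition ideal_pow :: "int \<Rightarrow> real set \<Rightarrow> nat \<Rightarrow> real set" where
  "ideal_pow D I k = ((\<lambda>J. lat_mult I J) ^^ k) (OK D)"

definition splits_in :: "int \<Rightarrow> nat \<Rightarrow> bool" where
  "splits_in D l \<longleftrightarrow> (\<exists>P Q. prime_ideal D P \<and> prime_ideal D Q \<and> P \<noteq> Q \<and>
      lat_mult P Q = {of_nat l * x | x. x \<in> OK D})"

definition prime_above :: "int \<Rightarrow> real set \<Rightarrow> nat \<Rightarrow> bool" where
  "prime_above D P l \<longleftrightarrow> prime_ideal D P \<and> of_nat l \<in> P"

definition is_order :: "int \<Rightarrow> real set \<Rightarrow> bool" where
  "is_order D Od \<longleftrightarrow> Od \<subseteq> Kfield D \<and> 1 \<in> Od \<and>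
     (\<forall>x\<in>Od. \<forall>y\<in>Od. x + y \<in> Od \<and> x * y \<in> Od \<and> - x \<in> Od) \<and>
     (\<exists>\<alpha>\<in>Kfield D. \<exists>\<beta>\<in>Kfield D.
        (\<forall>m n :: int. of_int m * \<alpha> + of_int n * \<beta> = 0 \<longrightarrow> m = 0 \<and> n = 0) \<and>
        Od = {of_int m * \<alpha> + of_int n * \<beta> | (m::int) (n::int). True})"

definition Lat :: "real \<Rightarrow> real set" where
  "Lat \<tau> = {of_int m + of_int n * \<tau> | (m::int) (n::int). True}"

definition Ord_of :: "int \<Rightarrow> real \<Rightarrow> real set" where
  "Ord_of D \<tau> = {u \<in> Kfield D. (\<lambda>x. u * x) ` Lat \<tau> \<subseteq> Lat \<tau>}"

text \<open>Product convention: \<NN> Lambda_tau means (\<NN> \<inter> O_tau) Lambda_tau.\<close>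
definition H_set :: "int \<Rightarrow> real set \<Rightarrow> nat \<Rightarrow> real set" where
  "H_set D NN N = {\<tau> \<in> Kfield D. lat_mult (NN \<inter> Ord_of D \<tau>) (Lat \<tau>) = Lat (of_nat N * \<tau>)
                     \<and> \<tau> - kconj D \<tau> > 0}"

definition H_O_set :: "int \<Rightarrow> real set \<Rightarrow> nat \<Rightarrow> real set \<Rightarrow> real set" where
  "H_O_set D NN N Od = {\<tau> \<in> H_set D NN N. Ord_of D \<tau> = Od}"

text \<open>The relation \<sim>_f on Z/fZ \<times> (K - Q); residues mod f represented by integers.
  d^{-1} r = r' (mod f) is written with an explicit inverse d' of d modulo f.\<close>
definition sim_f :: "int \<Rightarrow> nat \<Rightarrow> nat \<Rightarrow> int \<times> real \<Rightarrow> int \<times> real \<Rightarrow> bool" where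
  "sim_f D f N p q = (case (p, q) of ((r, \<tau>), (r', \<tau>')) \<Rightarrow>
     \<tau> \<in> Kfield D - \<rat> \<and> \<tau>' \<in> Kfield D - \<rat> \<and>
     (\<exists>a b c d :: int. a * d - b * c = 1 \<and> int (f * N) dvd c \<and>
        (\<exists>d' :: int. (d * d') mod int f = 1 mod int f \<and> (d' * r) mod int f = r' mod int f) \<and>
        \<tau>' = (of_int a * \<tau> + of_int b) / (of_int c * \<tau> + of_int d)))"

end

theory Submission
  imports Defs
begin

text \<open>Conjugation by the Fricke involution \<open>\<tau> \<mapsto> -1/(M\<tau>)\<close>, \<open>M = fN\<close>, maps
  \<open>\<gamma> = (a, b; c, d) \<in> \<Gamma>\<^sub>0(M)\<close> to \<open>(d, -c/M; -bM, a) \<in> \<Gamma>\<^sub>0(M)\<close>.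
  Since \<open>ad - bc = 1\<close> and \<open>f\<close> divides \<open>c\<close>, the new lower-right entry \<open>a\<close> is the inverse of
  \<open>d\<close> modulo \<open>f\<close>, so the residue condition \<open>d\<^sup>-\<^sup>1 r \<equiv> r'\<close> turns into \<open>a\<^sup>-\<^sup>1 r' \<equiv> r\<close>.
  This gives one implication; the converse follows because the Fricke map is an involution.\<close>

definition fricke :: "nat \<Rightarrow> real \<Rightarrow> real" where
  "fricke M \<tau> = -1 / (of_nat M * \<tau>)"

lemma fricke_fricke: "M > 0 \<Longrightarrow> fricke M (fricke M \<tau>) = \<tau>"
  by (cases "\<tau> = 0") (simp_all add: fricke_def field_simps)

lemma fricke_Rats: "\<tau> \<in> \<rat> \<Longrightarrow> fricke M \<tau> \<in> \<rat>"
  by (simp add: fricke_def)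

lemma Rats_subset_Kfield: "\<rat> \<subseteq> Kfield D"
proof
  fix x :: real assume "x \<in> \<rat>"
  then obtain a where "x = of_rat a" by (auto elim: Rats_cases)
  then have "x = of_rat a + of_rat 0 * sqrt (of_int D)" by simp
  then show "x \<in> Kfield D" unfolding Kfield_def by blast
qed

lemma Kfield_mult_Rats:
  assumes "q \<in> \<rat>" and "x \<in> Kfield D"
  shows "q * x \<in> Kfield D"
proof -
  obtain p where q: "q = of_rat p" using assms(1) by (auto elim: Rats_cases)
  obtain a b where x: "x = of_rat a + of_rat b * sqrt (of_int D)"
    using assms(2) unfolding Kfield_def by auto
  have "q * x = of_rat (p * a) + of_rat (p * b) * sqrt (of_int D)"
    unfolding q x by (simp add: of_rat_mult algebra_simps)
  then show ?thesis unfolding Kfield_def by blast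
qed

text \<open>Whatever the sign of \<open>D\<close>, \<open>sqrt D\<close> squares to \<open>|D|\<close>; if the norm
  \<open>a\<^sup>2 - |D| b\<^sup>2\<close> vanishes then \<open>sqrt D\<close> is rational and so is \<open>x\<close>.\<close>

lemma Kfield_inverse:
  assumes "x \<in> Kfield D"
  shows "inverse x \<in> Kfield D"
proof -
  define s where "s = sqrt (of_int D :: real)"
  obtain a b where x: "x = of_rat a + of_rat b * s"
    using assms unfolding Kfield_def s_def by auto
  define \<delta> where "\<delta> = a * a - of_int \<bar>D\<bar> * b * b"
  have s_square: "s * s = of_rat (of_int \<bar>D\<bar>)"
    unfolding s_def by (simp add: of_rat_of_int_eq) (metis abs_of_rat of_rat_of_int_eq)
  have x_times_conj: "x * (of_rat a - of_rat b * s) = of_rat \<delta>"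
    using s_square unfolding x \<delta>_def by (simp add: of_rat_mult of_rat_diff algebra_simps)
  show ?thesis
  proof (cases "\<delta> = 0")
    case False
    then have "of_rat \<delta> \<noteq> (0 :: real)" by simp
    then have "x \<noteq> 0" using x_times_conj by (metis mult_zero_left)
    have "inverse x = inverse x * (x * (of_rat a - of_rat b * s)) / of_rat \<delta>"
      unfolding x_times_conj using \<open>of_rat \<delta> \<noteq> 0\<close> by simp
    also have "\<dots> = (of_rat a - of_rat b * s) / of_rat \<delta>"
      using \<open>x \<noteq> 0\<close> by (simp add: mult.assoc [symmetric])
    also have "\<dots> = of_rat (a / \<delta>) + of_rat (- b / \<delta>) * s"
      by (simp add: of_rat_divide of_rat_minus diff_divide_distrib)
    finally show ?thesis unfolding Kfield_def s_def by blast
  next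
    case True
    have "x \<in> \<rat>"
    proof (cases "b = 0")
      case True
      then show ?thesis unfolding x by simp
    next
      case False
      have "a / b * (a / b) = of_int \<bar>D\<bar>"
        using \<open>\<delta> = 0\<close> False unfolding \<delta>_def by (simp add: field_simps)
      then have "s * s = of_rat (a / b) * of_rat (a / b)"
        unfolding s_square by (metis of_rat_mult)
      then have "\<bar>s\<bar> = \<bar>of_rat (a / b)\<bar>" by (metis real_sqrt_abs2)
      then have "s \<in> \<rat>" by (metis Rats_abs_iff Rats_of_rat)
      then show ?thesis unfolding x by simp
    qed
    then have "inverse x \<in> \<rat>" by simp
    then show ?thesis using Rats_subset_Kfield by blast
  qed
qed

lemma fricke_Kfield_minus_Rats:
  assumes "M > 0" and "\<tau> \<in> Kfield D - \<rat>"
  shows "fricke M \<tau> \<in> Kfield D - \<rat>"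
proof -
  have "fricke M \<tau> = (-1 / of_nat M) * inverse \<tau>"
    by (simp add: fricke_def field_simps)
  also have "\<dots> \<in> Kfield D"
    using Kfield_mult_Rats[OF _ Kfield_inverse, of "-1 / of_nat M" \<tau> D] assms(2) by simp
  finally have "fricke M \<tau> \<in> Kfield D" .
  moreover have "fricke M \<tau> \<notin> \<rat>"
    using fricke_Rats[of "fricke M \<tau>" M] fricke_fricke[OF assms(1)] assms(2) by auto
  ultimately show ?thesis by simp
qed

lemma fricke_moebius:
  fixes a b d k \<tau> :: real
  assumes "M > 0" and "\<tau> \<noteq> 0"
    and "(a * \<tau> + b) / (of_nat M * k * \<tau> + d) \<noteq> 0"
  shows "fricke M ((a * \<tau> + b) / (of_nat M * k * \<tau> + d))
       = (d * fricke M \<tau> + - k) / ((- b * of_nat M) * fricke M \<tau> + a)"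
proof -
  have "a * \<tau> + b \<noteq> 0" and "of_nat M * k * \<tau> + d \<noteq> 0" using assms(3) by auto
  then show ?thesis
    using assms(1,2) by (simp add: fricke_def divide_simps) (simp add: algebra_simps)
qed

lemma mod_inverse_swap:
  fixes d d' r r' m :: int
  assumes "(d * d') mod m = 1 mod m" and "(d' * r) mod m = r' mod m"
  shows "(d * r') mod m = r mod m"
proof -
  have "(d * r') mod m = (d * (d' * r)) mod m" using assms(2) by (metis mod_mult_right_eq)
  also have "\<dots> = ((d * d') * r) mod m" by (simp add: mult.assoc)
  also have "\<dots> = r mod m" using assms(1) by (metis mod_mult_left_eq mult_1)
  finally show ?thesis .
qed

lemma sim_f_fricke:
  assumes "f * N > 0" and "sim_f D f N (r, \<tau>) (r', \<tau>')"
  shows "sim_f D f N (r', fricke (f * N) \<tau>) (r, fricke (f * N) \<tau>')"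
proof -
  let ?M = "int (f * N)"
  obtain a b c d d' where \<tau>: "\<tau> \<in> Kfield D - \<rat>" "\<tau>' \<in> Kfield D - \<rat>"
    and det: "a * d - b * c = 1" and "?M dvd c"
    and inv: "(d * d') mod int f = 1 mod int f" and res: "(d' * r) mod int f = r' mod int f"
    and \<tau>': "\<tau>' = (of_int a * \<tau> + of_int b) / (of_int c * \<tau> + of_int d)"
    using assms(2) unfolding sim_f_def by auto
  obtain k where c: "c = ?M * k" using \<open>?M dvd c\<close> by blast
  have det': "d * a - (- k) * (- b * ?M) = 1" using det c by (simp add: algebra_simps)
  have "a * d = 1 + int f * (b * int N * k)" using det c by (simp add: algebra_simps)
  then have inv': "(a * d) mod int f = 1 mod int f" by simp
  have res': "(d * r') mod int f = r mod int f" using mod_inverse_swap[OF inv res] .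
  have "\<tau> \<noteq> 0" "\<tau>' \<noteq> 0" using \<tau> by auto
  then have "fricke (f * N) \<tau>' = (of_int d * fricke (f * N) \<tau> + of_int (- k))
      / (of_int (- b * ?M) * fricke (f * N) \<tau> + of_int a)"
    using fricke_moebius[OF assms(1), of \<tau> a b k d] \<tau>' c by simp
  then show ?thesis
    unfolding sim_f_def using fricke_Kfield_minus_Rats[OF assms(1)] \<tau> det' inv' res'
    by (simp only: prod.case) (metis dvd_triv_right)
qed

theorem lemma9p1:
  fixes D :: int and ls :: "nat list" and e :: "nat \<Rightarrow> nat" and \<eta> :: "nat \<Rightarrow> real set"
    and N f :: nat and NN Od :: "real set" and r r' :: int and \<tau> \<tau>' :: real
  assumes "squarefree D" and "D > 1"
    and "distinct ls"
    and "\<forall>l\<in>set ls. prime l \<and> splits_in D l \<and> prime_above D (\<eta> l) l \<and> e l \<ge> 1"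
    and "N = (\<Prod>l\<leftarrow>ls. l ^ e l)"
    and "NN = foldr (\<lambda>l J. lat_mult (ideal_pow D (\<eta> l) (e l)) J) ls (OK D)"
    and "f > 0" and "coprime (int f) (int N * discK D)"
    and "is_order D Od"
    and "\<tau> \<in> H_O_set D NN N Od" and "\<tau>' \<in> H_O_set D NN N Od"
  shows "sim_f D f N (r, \<tau>) (r', \<tau>') \<longleftrightarrow>
         sim_f D f N (r', -1 / (of_nat (f * N) * \<tau>)) (r, -1 / (of_nat (f * N) * \<tau>'))"
proof -
  have "N > 0"
    using assms(4) unfolding assms(5) by (induction ls) (auto simp: prime_gt_0_nat)
  with \<open>f > 0\<close> have M: "f * N > 0" by simp
  show ?thesis
    unfolding fricke_def[symmetric]
    using sim_f_fricke[OF M]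
      sim_f_fricke[OF M, where r = r' and r' = r
        and \<tau> = "fricke (f * N) \<tau>" and \<tau>' = "fricke (f * N) \<tau>'"]
    by (auto simp: fricke_fricke[OF M])
qed

end
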